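(* Let $k\geq 2$, let $\mathbb Z_0=\mathbb Z\setminus\{0\}$ and let $\{\lambda_j\}_{j\in\mathbb Z_0}$ be positive numbers. If there is a sequence of positive numbers $\{z_j\}_{j\in\mathbb Z_0}$ satisfying $$z_i=\lambda_i\Bigl(\frac{1}{1+\sum_{j\in\mathbb Z_0}z_j}\Bigr)^{k},\qquad i\in\mathbb Z_0,$$ then both series $\sum_{j\in\mathbb Z_0}z_j$ and $\sum_{j\in\mathbb Z_0}\lambda_j$ converge.
   Context: If $\sum_j z_j=+\infty$, the right-hand side is interpreted as $0$. *)

theory Defs
  imports "HOL-Analysis.Analysis"
begin

end

theory Submission
  imports Defs
begin

text \<open>If \<open>\<Sum>z\<^sub>j\<close> diverged, the equation would force \<open>z\<^sub>i = 0\<close>, contradicting positivity.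
  Once \<open>\<Sum>z\<^sub>j = S\<close> is finite, \<open>\<lambda>\<^sub>i = z\<^sub>i (1 + S)\<^sup>k\<close> is a constant multiple of \<open>z\<^sub>i\<close>,
  so \<open>\<Sum>\<lambda>\<^sub>j\<close> converges as well.\<close>

theorem mainTheorem3:
  fixes k :: nat and lam z :: "int \<Rightarrow> real"
  assumes k: "k \<ge> 2"
    and lam_pos: "\<And>j. j \<noteq> 0 \<Longrightarrow> lam j > 0"
    and z_pos: "\<And>j. j \<noteq> 0 \<Longrightarrow> z j > 0"
    and eq: "\<And>i. i \<noteq> 0 \<Longrightarrow>
       z i = lam i * (if z summable_on {j. j \<noteq> 0}
                      then (1 / (1 + infsum z {j. j \<noteq> 0})) ^ k
                      else 0)"
  shows "z summable_on {j::int. j \<noteq> 0} \<and> lam summable_on {j::int. j \<noteq> 0}"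
proof
  show z_summable: "z summable_on {j. j \<noteq> 0}"
  proof (rule ccontr)
    assume "\<not> z summable_on {j. j \<noteq> 0}"
    then have "z 1 = 0"
      using eq[of 1] by simp
    with z_pos[of 1] show False
      by simp
  qed
  define c where "c = (1 / (1 + infsum z {j::int. j \<noteq> 0})) ^ k"
  have "infsum z {j::int. j \<noteq> 0} \<ge> 0"
    using z_pos by (intro infsum_nonneg) (simp add: less_imp_le)
  then have "c \<noteq> 0"
    unfolding c_def by simp
  have z_eq: "z i = lam i * c" if "i \<noteq> 0" for i
    using eq[OF that] z_summable unfolding c_def by simp
  have "(\<lambda>i. lam i * c) summable_on {j. j \<noteq> 0}"
    using z_summable by (subst summable_on_cong[where g = z]) (simp_all add: z_eq)
  then show "lam summable_on {j. j \<noteq> 0}"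
    using summable_on_cmult_left'[OF \<open>c \<noteq> 0\<close>] by blast
qed

end
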